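(* Let $G=(V,E)$ be a directed graph, $s\neq t$ vertices, $k\ge 1$ an integer and $e(u,v)\in E$. Suppose that for all integers $0\le k_f,k_b\le k-1$ with $k_f+1+k_b\le k$, either (1) $EV^*_{k_f}(s,u)$ or $EV^*_{k_b}(v,t)$ does not exist, or (2) $EV^*_{k_f}(s,u)\cap EV^*_{k_b}(v,t)\neq\emptyset$. Then $e(u,v)$ is not an edge of $SPG_k(s,t)$.
   Context: A path from $x$ to $y$ in $G$ is a vertex sequence $x=v_0,\dots,v_l=y$ with $(v_{i-1},v_i)\in E$; its length is $l$ and $V(p)$, $E(p)$ are its vertex and edge sets. A simple path has no repeated vertex. $SPG_k(s,t)$ is the subgraph of $G$ formed by the union of vertex sets and edge sets of all simple paths from $s$ to $t$ of length at most $k$. For a vertex $u$ and integer $l\ge 0$, $EV^*_l(s,u)$ exists iff there is at least one simple path from $s$ to $u$ of length at most $l$ not containing $t$, and then $EV^*_l(s,u)$ is the intersection of $V(p)$ over all such paths. Symmetrically, $EV^*_l(v,t)$ exists iff there is at least one simple path from $v$ to $t$ of length at most $l$ not containing $s$, and then it is the intersection of $V(p)$ over all such paths. *)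

theory Defs
  imports Main
begin

definition is_path :: "('a \<times> 'a) set \<Rightarrow> 'a list \<Rightarrow> 'a \<Rightarrow> 'a \<Rightarrow> bool" where
  "is_path E p x y \<longleftrightarrow> p \<noteq> [] \<and> hd p = x \<and> last p = y \<and>
     (\<forall>i. Suc i < length p \<longrightarrow> (p ! i, p ! Suc i) \<in> E)"

definition path_len :: "'a list \<Rightarrow> nat" where
  "path_len p = length p - 1"

definition path_edges :: "'a list \<Rightarrow> ('a \<times> 'a) set" where
  "path_edges p = {(p ! i, p ! Suc i) | i. Suc i < length p}"

definition simple_path :: "('a \<times> 'a) set \<Rightarrow> 'a list \<Rightarrow> 'a \<Rightarrow> 'a \<Rightarrow> bool" where
  "simple_path E p x y \<longleftrightarrow> is_path E p x y \<and> distinct p"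

definition SPG_edges :: "('a \<times> 'a) set \<Rightarrow> nat \<Rightarrow> 'a \<Rightarrow> 'a \<Rightarrow> ('a \<times> 'a) set" where
  "SPG_edges E k s t = \<Union> {path_edges p | p. simple_path E p s t \<and> path_len p \<le> k}"

definition fwd_paths :: "('a \<times> 'a) set \<Rightarrow> 'a \<Rightarrow> 'a \<Rightarrow> nat \<Rightarrow> 'a \<Rightarrow> 'a list set" where
  "fwd_paths E s t l u = {p. simple_path E p s u \<and> path_len p \<le> l \<and> t \<notin> set p}"

definition EVf_exists :: "('a \<times> 'a) set \<Rightarrow> 'a \<Rightarrow> 'a \<Rightarrow> nat \<Rightarrow> 'a \<Rightarrow> bool" where
  "EVf_exists E s t l u \<longleftrightarrow> fwd_paths E s t l u \<noteq> {}"

definition EVf :: "('a \<times> 'a) set \<Rightarrow> 'a \<Rightarrow> 'a \<Rightarrow> nat \<Rightarrow> 'a \<Rightarrow> 'a set" where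
  "EVf E s t l u = (\<Inter>p \<in> fwd_paths E s t l u. set p)"

definition bwd_paths :: "('a \<times> 'a) set \<Rightarrow> 'a \<Rightarrow> 'a \<Rightarrow> nat \<Rightarrow> 'a \<Rightarrow> 'a list set" where
  "bwd_paths E s t l v = {p. simple_path E p v t \<and> path_len p \<le> l \<and> s \<notin> set p}"

definition EVb_exists :: "('a \<times> 'a) set \<Rightarrow> 'a \<Rightarrow> 'a \<Rightarrow> nat \<Rightarrow> 'a \<Rightarrow> bool" where
  "EVb_exists E s t l v \<longleftrightarrow> bwd_paths E s t l v \<noteq> {}"

definition EVb :: "('a \<times> 'a) set \<Rightarrow> 'a \<Rightarrow> 'a \<Rightarrow> nat \<Rightarrow> 'a \<Rightarrow> 'a set" where
  "EVb E s t l v = (\<Inter>p \<in> bwd_paths E s t l v. set p)"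

end

theory Submission
  imports Defs
begin

text \<open>A simple s-t path of length at most k through the edge (u, v) splits at that edge into a
  simple s-u path of length kf avoiding t and a simple v-t path of length kb avoiding s, with
  kf + 1 + kb \<le> k. Each EV-set is contained in the vertex set of the corresponding piece, and the
  two pieces are disjoint because the whole path is simple.\<close>

lemma is_path_take:
  assumes "is_path E p x y" and "i < length p"
  shows "is_path E (take (Suc i) p) x (p ! i)"
  using assms unfolding is_path_def by (auto simp: last_conv_nth)

lemma is_path_drop:
  assumes "is_path E p x y" and "i < length p"
  shows "is_path E (drop i p) (p ! i) y"
  using assms unfolding is_path_def by (auto simp: hd_drop_conv_nth)

lemma path_len_append:
  assumes "p \<noteq> []" and "q \<noteq> []"
  shows "path_len (p @ q) = path_len p + 1 + path_len q"
  using assms unfolding path_len_def by (simp add: Suc_leI)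

lemma simple_path_split_at_edge:
  assumes "simple_path E p x y" and "(u, v) \<in> path_edges p"
  obtains p1 p2 where "p = p1 @ p2" and "simple_path E p1 x u" and "simple_path E p2 v y"
proof -
  from assms(2) obtain i where "u = p ! i" "v = p ! Suc i" "Suc i < length p"
    unfolding path_edges_def by blast
  define p1 p2 where "p1 = take (Suc i) p" and "p2 = drop (Suc i) p"
  have path: "is_path E p x y" and "distinct p"
    using assms(1) unfolding simple_path_def by auto
  have "simple_path E p1 x u"
    using is_path_take[OF path] \<open>distinct p\<close> \<open>u = p ! i\<close> \<open>Suc i < length p\<close>
    unfolding simple_path_def p1_def by simp
  moreover have "simple_path E p2 v y"
    using is_path_drop[OF path] \<open>distinct p\<close> \<open>v = p ! Suc i\<close> \<open>Suc i < length p\<close>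
    unfolding simple_path_def p2_def by simp
  ultimately show thesis
    using that[of p1 p2] unfolding p1_def p2_def by simp
qed

lemma simple_path_endpoints:
  assumes "simple_path E p x y"
  shows "x \<in> set p" and "y \<in> set p" and "p \<noteq> []"
  using assms unfolding simple_path_def is_path_def by auto

theorem theorem3p4:
  fixes E :: "('a \<times> 'a) set" and s t u v :: 'a and k :: nat
  assumes "s \<noteq> t" and "k \<ge> 1" and "(u, v) \<in> E"
    and "\<forall>kf kb. kf \<le> k - 1 \<and> kb \<le> k - 1 \<and> kf + 1 + kb \<le> k \<longrightarrow>
           (\<not> EVf_exists E s t kf u \<or> \<not> EVb_exists E s t kb v) \<or>
           EVf E s t kf u \<inter> EVb E s t kb v \<noteq> {}"
  shows "(u, v) \<notin> SPG_edges E k s t"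
proof
  assume "(u, v) \<in> SPG_edges E k s t"
  then obtain p where p: "simple_path E p s t" "path_len p \<le> k" "(u, v) \<in> path_edges p"
    unfolding SPG_edges_def by blast
  obtain p1 p2 where split: "p = p1 @ p2" and p1: "simple_path E p1 s u"
    and p2: "simple_path E p2 v t"
    by (rule simple_path_split_at_edge[OF p(1) p(3)])
  have disjoint: "set p1 \<inter> set p2 = {}"
    using p(1) split unfolding simple_path_def by simp
  define kf kb where "kf = path_len p1" and "kb = path_len p2"
  have lens: "kf + 1 + kb \<le> k"
    using p(2) split
      path_len_append[OF simple_path_endpoints(3)[OF p1] simple_path_endpoints(3)[OF p2]]
    unfolding kf_def kb_def by simp
  have "p1 \<in> fwd_paths E s t kf u" and "p2 \<in> bwd_paths E s t kb v"
    using p1 p2 disjoint simple_path_endpoints[OF p1] simple_path_endpoints[OF p2]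
    unfolding fwd_paths_def bwd_paths_def kf_def kb_def by auto
  then have "EVf_exists E s t kf u" "EVb_exists E s t kb v"
    and "EVf E s t kf u \<inter> EVb E s t kb v = {}"
    using disjoint unfolding EVf_exists_def EVb_exists_def EVf_def EVb_def by blast+
  moreover have "kf \<le> k - 1" "kb \<le> k - 1"
    using lens by auto
  ultimately show False
    using assms(4) lens by blast
qed

end
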